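(* Consider the controlled impulsive system $\dot x(t)=Ax(t)+B_cu_c(t)$ for $t\ne t_k$, $x(t_k^+)=Jx(t_k)+B_du_d(t_k)$, with arbitrary real matrices $A,J\in\mathbb{R}^{n\times n}$, $B_c\in\mathbb{R}^{n\times m_c}$, $B_d\in\mathbb{R}^{n\times m_d}$. Assume there exist a diagonal matrix $X\in\mathbb{D}^n_{\succ0}$, matrices $U_c\in\mathbb{R}^{m_c\times n}$, $U_d\in\mathbb{R}^{m_d\times n}$ and a scalar $\alpha\in\mathbb{R}$ such that $AX+B_cU_c+\alpha I_n\ge0$, $JX+B_dU_d\ge0$, $(AX+B_cU_c)\mathbf{1}_n<0$ and $(JX+B_dU_d-X)\mathbf{1}_n<0$. Then, with $K_c=U_cX^{-1}$, $K_d=U_dX^{-1}$ and the state feedback $u_c(t)=K_cx(t)$, $u_d(t)=K_dx(t)$, the closed-loop system $\dot x=(A+B_cK_c)x$, $x(t_k^+)=(J+B_dK_d)x(t_k)$ is positive ($A+B_cK_c$ is Metzler and $J+B_dK_d$ is nonnegative) and asymptotically stable under arbitrary dwell-time.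
   Context: $\mathbb{D}^n_{\succ0}$ denotes the set of $n\times n$ diagonal matrices with positive diagonal entries. Matrix and vector inequalities are entrywise; $\mathbf{1}_n$ is the vector of ones. $x(t^+)=\lim_{s\downarrow t}x(s)$; impulse times are strictly increasing with $t_k\to\infty$. A matrix is Metzler if its off-diagonal entries are nonnegative. Asymptotic stability under arbitrary dwell-time means global asymptotic stability of the zero solution for every impulse sequence with $t_{k+1}-t_k\in(0,\infty)$. *)

theory Defs
  imports "HOL-Analysis.Analysis"
begin

text \<open>Matrices are rendered as \<open>real^'c^'r\<close> (r rows, c columns).\<close>

definition metzler :: "real^'n^'n \<Rightarrow> bool" where
  "metzler M \<longleftrightarrow> (\<forall>i j. i \<noteq> j \<longrightarrow> M $ i $ j \<ge> 0)"

definition nonneg_mat :: "real^'c^'r \<Rightarrow> bool" where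
  "nonneg_mat M \<longleftrightarrow> (\<forall>i j. M $ i $ j \<ge> 0)"

definition pos_diag :: "real^'n^'n \<Rightarrow> bool" where
  "pos_diag X \<longleftrightarrow> (\<forall>i j. i \<noteq> j \<longrightarrow> X $ i $ j = 0) \<and> (\<forall>i. X $ i $ i > 0)"

definition ones :: "real^'n" where
  "ones = (\<chi> i. 1)"

definition impulse_seq :: "(nat \<Rightarrow> real) \<Rightarrow> bool" where
  "impulse_seq tk \<longleftrightarrow> strict_mono tk \<and> tk 0 > 0 \<and> filterlim tk at_top sequentially"

definition impulsive_solution ::
  "real^'n^'n \<Rightarrow> real^'n^'n \<Rightarrow> (nat \<Rightarrow> real) \<Rightarrow> (real \<Rightarrow> real^'n) \<Rightarrow> bool" where
  "impulsive_solution A J tk x \<longleftrightarrow>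
     (\<forall>s. s \<ge> 0 \<longrightarrow> s \<notin> range tk \<longrightarrow>
          (x has_vector_derivative (A *v x s)) (at s within {0..})) \<and>
     (\<forall>k. (x \<longlongrightarrow> x (tk k)) (at_left (tk k))) \<and>
     (\<forall>k. (x \<longlongrightarrow> J *v x (tk k)) (at_right (tk k)))"

definition GAS_arbitrary_dwell :: "real^'n^'n \<Rightarrow> real^'n^'n \<Rightarrow> bool" where
  "GAS_arbitrary_dwell A J \<longleftrightarrow>
     (\<forall>tk. impulse_seq tk \<longrightarrow>
        (\<forall>\<epsilon>>0. \<exists>\<delta>>0. \<forall>x. impulsive_solution A J tk x \<longrightarrow> norm (x 0) < \<delta> \<longrightarrow>
              (\<forall>s\<ge>0. norm (x s) < \<epsilon>)) \<and>
        (\<forall>x. impulsive_solution A J tk x \<longrightarrow> (x \<longlongrightarrow> 0) at_top))"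

end

theory Submission
  imports Defs "HOL-Real_Asymp.Real_Asymp"
begin

text \<open>With \<open>M = (A X + B\<^sub>c U\<^sub>c) X\<^sup>-\<^sup>1\<close> and \<open>N = (J X + B\<^sub>d U\<^sub>d) X\<^sup>-\<^sup>1\<close>, right
  multiplication by the positive diagonal matrix \<open>X\<^sup>-\<^sup>1\<close> preserves sign patterns, so \<open>M\<close> is
  Metzler and \<open>N\<close> is nonnegative, and \<open>v = X \<one>\<close> satisfies \<open>M v < 0\<close> and \<open>N v \<le> v\<close>.
  Stability comes from the linear copositive Lyapunov function \<open>max\<^sub>i |x\<^sub>i| / v\<^sub>i\<close>: choose
  \<open>\<gamma> > 0\<close> with \<open>M v < -\<gamma> v\<close>. Between impulses a solution cannot leave the shrinking box
  \<open>|x| \<le> K e\<^sup>-\<^sup>\<gamma>\<^sup>t v\<close>: at a first time where a component touches its bound, the off-diagonal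
  nonnegativity of \<open>M\<close> makes that component move strictly inwards. At impulses the nonnegative
  \<open>N\<close> with \<open>N v \<le> v\<close> maps the box into itself. Hence \<open>\<parallel>x(t)\<parallel> \<le> C \<parallel>x(0)\<parallel> e\<^sup>-\<^sup>\<gamma>\<^sup>t\<close>
  whatever the impulse times are.\<close>

definition diag_mat :: "real^'n \<Rightarrow> real^'n^'n" where
  "diag_mat d = (\<chi> i j. if i = j then d $ i else 0)"

lemma pos_diag_eq_diag_mat:
  assumes "pos_diag X"
  shows "X = diag_mat (\<chi> i. X $ i $ i)"
  using assms unfolding pos_diag_def diag_mat_def by (simp add: vec_eq_iff)

lemma matrix_mul_diag_mat_nth: "(P ** diag_mat d) $ i $ j = P $ i $ j * d $ j"
proof -
  have "(P ** diag_mat d) $ i $ j = (\<Sum>k\<in>UNIV. if k = j then P $ i $ j * d $ j else 0)"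
    unfolding matrix_matrix_mult_def diag_mat_def by (simp only: vec_lambda_beta) (rule sum.cong; auto)
  then show ?thesis by simp
qed

lemma diag_mat_mul_diag_mat: "diag_mat d ** diag_mat e = diag_mat (\<chi> i. d $ i * e $ i)"
  by (simp add: vec_eq_iff matrix_mul_diag_mat_nth) (simp add: diag_mat_def)

lemma diag_mat_mult_ones: "diag_mat d *v ones = d"
proof -
  have "(diag_mat d *v ones) $ i = (\<Sum>k\<in>UNIV. if k = i then d $ i else 0)" for i
    unfolding matrix_vector_mult_def diag_mat_def ones_def by (simp only: vec_lambda_beta) (rule sum.cong; auto)
  then show ?thesis by (simp add: vec_eq_iff)
qed

lemma matrix_inv_unique:
  fixes A :: "'a::semiring_1^'n^'m"
  assumes "A ** B = mat 1" "B ** A = mat 1"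
  shows "matrix_inv A = B"
proof -
  have "A ** matrix_inv A = mat 1 \<and> matrix_inv A ** A = mat 1"
    unfolding matrix_inv_def by (rule someI[of _ B]) (use assms in simp)
  then have "matrix_inv A = matrix_inv A ** (A ** B)"
    by (simp add: assms(1))
  also have "\<dots> = B"
    by (simp add: matrix_mul_assoc \<open>_ \<and> matrix_inv A ** A = mat 1\<close>)
  finally show ?thesis .
qed

lemma diag_mat_mul_inverse:
  assumes "\<forall>i. d $ i \<noteq> 0"
  shows "diag_mat d ** diag_mat (\<chi> i. 1 / d $ i) = mat 1"
    and "diag_mat (\<chi> i. 1 / d $ i) ** diag_mat d = mat 1"
proof -
  have "diag_mat (\<chi> i. d $ i * (1 / d $ i)) = mat 1" "diag_mat (\<chi> i. 1 / d $ i * d $ i) = mat 1"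
    using assms by (simp_all add: diag_mat_def mat_def vec_eq_iff)
  then show "diag_mat d ** diag_mat (\<chi> i. 1 / d $ i) = mat 1"
    "diag_mat (\<chi> i. 1 / d $ i) ** diag_mat d = mat 1"
    by (simp_all add: diag_mat_mul_diag_mat)
qed

lemma matrix_inv_diag_mat:
  assumes "\<forall>i. d $ i \<noteq> 0"
  shows "matrix_inv (diag_mat d) = diag_mat (\<chi> i. 1 / d $ i)"
  using matrix_inv_unique diag_mat_mul_inverse[OF assms] by blast

lemma nonneg_mat_mul_diag_mat:
  assumes "nonneg_mat P" "\<forall>i. d $ i \<ge> 0"
  shows "nonneg_mat (P ** diag_mat d)"
  using assms by (simp add: nonneg_mat_def matrix_mul_diag_mat_nth)

lemma metzler_mul_diag_mat:
  assumes "metzler P" "\<forall>i. d $ i \<ge> 0"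
  shows "metzler (P ** diag_mat d)"
  using assms by (simp add: metzler_def matrix_mul_diag_mat_nth)

lemma metzler_if_nonneg_mat_add_scaled_id:
  assumes "nonneg_mat (P + c *\<^sub>R mat 1)"
  shows "metzler P"
proof -
  have "0 \<le> P $ i $ j" if "i \<noteq> j" for i j
  proof -
    have "0 \<le> (P + c *\<^sub>R mat 1) $ i $ j" using assms unfolding nonneg_mat_def by blast
    then show ?thesis using that by (simp add: mat_def)
  qed
  then show ?thesis unfolding metzler_def by blast
qed

lemma feedback_closed_loop:
  fixes A X Xi :: "'a::semiring_1^'n^'n" and B :: "'a^'m^'n"
  assumes "X ** Xi = mat 1"
  shows "A + B ** (U ** Xi) = (A ** X + B ** U) ** Xi"
proof -
  have "(A ** X + B ** U) ** Xi = A ** X ** Xi + B ** U ** Xi"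
    by (vector matrix_matrix_mult_def sum.distrib[symmetric] distrib_right)
  moreover have "A ** X ** Xi = A"
    by (simp add: matrix_mul_assoc[symmetric] assms)
  ultimately show ?thesis by (simp add: matrix_mul_assoc)
qed

lemma has_real_derivative_vec_nth:
  fixes x :: "real \<Rightarrow> real^'n"
  assumes "(x has_vector_derivative d) F"
  shows "((\<lambda>t. x t $ i) has_real_derivative d $ i) F"
  using bounded_linear.has_vector_derivative[OF bounded_linear_vec_nth assms]
  by (simp add: has_real_derivative_iff_has_vector_derivative)

lemma tendsto_upperbound_at_left:
  fixes f :: "real \<Rightarrow> real"
  assumes "(f \<longlongrightarrow> l) (at_left c)" "a < c" "\<forall>t. a < t \<and> t < c \<longrightarrow> f t \<le> B"
  shows "l \<le> B"
proof (rule tendsto_upperbound[OF assms(1)])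
  show "\<forall>\<^sub>F t in at_left c. f t \<le> B"
    unfolding eventually_at_left_field using assms(2,3) by blast
qed (simp add: trivial_limit_at_left_real)

lemma has_real_derivative_nonneg_at_first_zero:
  fixes h :: "real \<Rightarrow> real"
  assumes "(h has_real_derivative D) (at c)" "h c = 0" "a < c" "\<forall>s. a < s \<and> s < c \<longrightarrow> h s < 0"
  shows "D \<ge> 0"
proof (rule ccontr)
  assume "\<not> D \<ge> 0"
  then obtain d where "d > 0" and dec: "\<forall>e>0. e < d \<longrightarrow> h c < h (c - e)"
    using DERIV_neg_dec_left assms(1) by (meson not_le)
  define e where "e = min d (c - a) / 2"
  have "e > 0" "e < d" "a < c - e" using \<open>d > 0\<close> \<open>a < c\<close> by (auto simp: e_def min_def field_simps)
  then show False using dec assms(2,4) by fastforce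
qed

lemma first_nonneg_time:
  fixes g :: "'i::finite \<Rightarrow> real \<Rightarrow> real"
  assumes cont: "\<forall>s j. a < s \<and> s < b \<longrightarrow> isCont (g j) s"
    and start: "\<forall>\<^sub>F s in at_right a. \<forall>j. g j s < 0"
    and t: "a < t" "t < b" and nonneg: "g j t \<ge> 0"
  obtains ts i where "a < ts" "ts \<le> t" "\<forall>s j. a < s \<and> s < ts \<longrightarrow> g j s < 0"
    "\<forall>j. g j ts \<le> 0" "g i ts = 0"
proof -
  obtain c where "c > a" and before_c: "\<forall>s. a < s \<and> s < c \<longrightarrow> (\<forall>j. g j s < 0)"
    using start unfolding eventually_at_right_field by blast
  define S where "S = (\<Union>j. {c..t} \<inter> g j -` {0..})"
  have "c \<le> t"
  proof (rule ccontr)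
    assume "\<not> c \<le> t"
    then have "g j t < 0" using before_c t by auto
    with nonneg show False by simp
  qed
  with nonneg have "t \<in> S" by (auto simp: S_def)
  have "closed S"
  proof -
    have "continuous_on {c..t} (g j)" for j
      using cont \<open>c > a\<close> t by (intro continuous_at_imp_continuous_on) auto
    then show ?thesis
      unfolding S_def by (intro closed_Union finite_imageI) (auto intro: continuous_closed_preimage)
  qed
  define ts where "ts = Inf S"
  have bdd: "bdd_below S" unfolding S_def by (rule bdd_belowI[of _ c]) auto
  have "ts \<in> S" unfolding ts_def using \<open>closed S\<close> \<open>t \<in> S\<close> bdd by (intro closed_contains_Inf) auto
  then obtain i where "c \<le> ts" "ts \<le> t" "g i ts \<ge> 0" unfolding S_def by auto
  have below: "\<forall>s j. a < s \<and> s < ts \<longrightarrow> g j s < 0"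
  proof (intro allI impI)
    fix s j assume s: "a < s \<and> s < ts"
    have "s \<notin> S" using cInf_lower[OF _ bdd, of s] s unfolding ts_def by auto
    then show "g j s < 0" using before_c s \<open>ts \<le> t\<close> by (cases "s < c") (auto simp: S_def not_le)
  qed
  have box: "g j ts \<le> 0" for j
  proof (rule tendsto_upperbound_at_left)
    show "(g j \<longlongrightarrow> g j ts) (at_left ts)"
      using cont \<open>c > a\<close> \<open>c \<le> ts\<close> \<open>ts \<le> t\<close> t by (auto simp: isCont_def filterlim_at_split)
  qed (use below \<open>c > a\<close> \<open>c \<le> ts\<close> in \<open>auto intro: less_imp_le\<close>)
  with \<open>g i ts \<ge> 0\<close> have "g i ts = 0" by (meson antisym)
  show thesis
    by (rule that) (use \<open>c > a\<close> \<open>c \<le> ts\<close> \<open>ts \<le> t\<close> below box \<open>g i ts = 0\<close> in auto)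
qed

lemma metzler_touching_row:
  assumes "metzler M" and "\<sigma> = 1 \<or> \<sigma> = -1" and touch: "\<sigma> * y $ i = v $ i * R"
    and box: "\<forall>j. \<bar>y $ j\<bar> \<le> v $ j * R"
  shows "\<sigma> * (M *v y) $ i \<le> (M *v v) $ i * R"
proof -
  have "\<sigma> * (M *v y) $ i = (\<Sum>j\<in>UNIV. M $ i $ j * (\<sigma> * y $ j))"
    by (simp add: matrix_vector_mult_def sum_distrib_left algebra_simps)
  also have "\<dots> \<le> (\<Sum>j\<in>UNIV. M $ i $ j * (v $ j * R))"
  proof (rule sum_mono)
    fix j
    show "M $ i $ j * (\<sigma> * y $ j) \<le> M $ i $ j * (v $ j * R)"
    proof (cases "j = i")
      case False
      have "\<sigma> * y $ j \<le> v $ j * R" using assms(2) box[rule_format, of j] by auto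
      then show ?thesis using \<open>metzler M\<close> False by (simp add: metzler_def mult_left_mono)
    qed (use touch in simp)
  qed
  also have "\<dots> = (M *v v) $ i * R"
    by (simp add: matrix_vector_mult_def sum_distrib_left sum_distrib_right mult_ac)
  finally show ?thesis .
qed

lemma nonneg_mat_maps_box:
  assumes "nonneg_mat N" and Nv: "\<forall>i. (N *v v) $ i \<le> v $ i"
    and box: "\<forall>j. \<bar>y $ j\<bar> \<le> v $ j * K" and "K \<ge> 0"
  shows "\<bar>(N *v y) $ i\<bar> \<le> v $ i * K"
proof -
  have "\<bar>(N *v y) $ i\<bar> \<le> (\<Sum>j\<in>UNIV. \<bar>N $ i $ j * y $ j\<bar>)"
    unfolding matrix_vector_mult_def by (simp add: sum_abs)
  also have "\<dots> \<le> (\<Sum>j\<in>UNIV. N $ i $ j * (v $ j * K))"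
    using \<open>nonneg_mat N\<close> box by (intro sum_mono) (simp add: nonneg_mat_def abs_mult mult_left_mono)
  also have "\<dots> = (N *v v) $ i * K"
    by (simp add: matrix_vector_mult_def sum_distrib_left sum_distrib_right mult_ac)
  also have "\<dots> \<le> v $ i * K" using Nv \<open>K \<ge> 0\<close> by (simp add: mult_right_mono)
  finally show ?thesis .
qed

lemma flow_box_strict_decay:
  fixes M :: "real^'n^'n" and x :: "real \<Rightarrow> real^'n"
  assumes "metzler M" and vpos: "\<forall>i. v $ i > 0" and decay: "\<forall>i. (M *v v) $ i < -\<gamma> * v $ i"
    and der: "\<forall>s. a < s \<and> s < b \<longrightarrow> (x has_vector_derivative (M *v x s)) (at s)"
    and start: "(x \<longlongrightarrow> y) (at_right a)" and inside: "\<forall>i. \<bar>y $ i\<bar> < v $ i * K"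
  shows "\<forall>t i. a < t \<and> t < b \<longrightarrow> \<bar>x t $ i\<bar> < v $ i * K * exp (-\<gamma> * (t - a))"
proof (rule ccontr)
  define R where "R s = K * exp (-\<gamma> * (s - a))" for s
  define g where "g j s = \<bar>x s $ j\<bar> - v $ j * R s" for j s
  assume "\<not> ?thesis"
  then obtain t j where t: "a < t" "t < b" and "g j t \<ge> 0"
    by (auto simp: g_def R_def not_less mult.assoc)
  have "K > 0"
    using inside[rule_format, of undefined] vpos[rule_format, of undefined]
    by (metis abs_ge_zero le_less_trans zero_less_mult_pos)
  then have Rpos: "R s > 0" for s by (simp add: R_def)
  have cont: "\<forall>s j. a < s \<and> s < b \<longrightarrow> isCont (g j) s"
  proof (intro allI impI)
    fix s j assume "a < s \<and> s < b"
    then have "isCont x s" using der has_vector_derivative_continuous by blast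
    then show "isCont (g j) s" unfolding g_def R_def by (intro continuous_intros)
  qed
  have start_neg: "\<forall>\<^sub>F s in at_right a. \<forall>j. g j s < 0"
  proof (rule eventually_all_finite)
    fix j
    have "(g j \<longlongrightarrow> \<bar>y $ j\<bar> - v $ j * R a) (at_right a)"
      unfolding g_def R_def by (intro tendsto_intros start)
    moreover have "\<bar>y $ j\<bar> - v $ j * R a < 0" using inside by (simp add: R_def)
    ultimately show "\<forall>\<^sub>F s in at_right a. g j s < 0" by (rule order_tendstoD)
  qed
  obtain ts i where "a < ts" "ts \<le> t" and below: "\<forall>s j. a < s \<and> s < ts \<longrightarrow> g j s < 0"
    and box: "\<forall>j. g j ts \<le> 0" and touch: "g i ts = 0"
    using first_nonneg_time[OF cont start_neg t \<open>g j t \<ge> 0\<close>] by blast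
  with t have ts: "a < ts" "ts < b" by auto
  define \<sigma> :: real where "\<sigma> = (if x ts $ i \<ge> 0 then 1 else -1)"
  have \<sigma>: "\<sigma> = 1 \<or> \<sigma> = -1" by (simp add: \<sigma>_def)
  have \<sigma>_touch: "\<sigma> * x ts $ i = v $ i * R ts" using touch by (auto simp: g_def \<sigma>_def)
  define h where "h s = \<sigma> * x s $ i - v $ i * R s" for s
  have "((\<lambda>s. x s $ i) has_real_derivative (M *v x ts) $ i) (at ts)"
    using has_real_derivative_vec_nth der ts by blast
  then have "(h has_real_derivative \<sigma> * (M *v x ts) $ i + \<gamma> * (v $ i * R ts)) (at ts)"
    unfolding h_def R_def by (auto intro!: derivative_eq_intros simp: algebra_simps)
  moreover have "h s < 0" if "a < s" "s < ts" for s
  proof -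
    have "\<sigma> * x s $ i \<le> \<bar>x s $ i\<bar>" using \<sigma> by auto
    moreover have "g i s < 0" using below that by blast
    ultimately show ?thesis unfolding g_def h_def by linarith
  qed
  ultimately have "\<sigma> * (M *v x ts) $ i + \<gamma> * (v $ i * R ts) \<ge> 0"
    using has_real_derivative_nonneg_at_first_zero \<sigma>_touch \<open>a < ts\<close> by (fastforce simp: h_def)
  moreover have "\<sigma> * (M *v x ts) $ i \<le> (M *v v) $ i * R ts"
    using metzler_touching_row[OF \<open>metzler M\<close> \<sigma> \<sigma>_touch] box by (auto simp: g_def)
  moreover have "(M *v v) $ i * R ts < -\<gamma> * v $ i * R ts"
    using mult_strict_right_mono[OF decay[rule_format, of i] Rpos[of ts]] .
  ultimately show False by simp
qed

lemma flow_box_decay: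
  fixes M :: "real^'n^'n" and x :: "real \<Rightarrow> real^'n"
  assumes "metzler M" and vpos: "\<forall>i. v $ i > 0" and decay: "\<forall>i. (M *v v) $ i < -\<gamma> * v $ i"
    and der: "\<forall>s. a < s \<and> s < b \<longrightarrow> (x has_vector_derivative (M *v x s)) (at s)"
    and start: "(x \<longlongrightarrow> y) (at_right a)" and stop: "(x \<longlongrightarrow> x b) (at_left b)"
    and "a < b" and inside: "\<forall>i. \<bar>y $ i\<bar> \<le> v $ i * K"
  shows "\<forall>t i. a < t \<and> t \<le> b \<longrightarrow> \<bar>x t $ i\<bar> \<le> v $ i * K * exp (-\<gamma> * (t - a))"
proof -
  have open_interval: "\<bar>x s $ i\<bar> \<le> v $ i * K * exp (-\<gamma> * (s - a))" if "a < s" "s < b" for s i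
  proof (rule tendsto_lowerbound)
    show "((\<lambda>\<delta>. v $ i * (K + \<delta>) * exp (-\<gamma> * (s - a))) \<longlongrightarrow> v $ i * K * exp (-\<gamma> * (s - a)))
      (at_right 0)"
      by (auto intro!: tendsto_eq_intros)
    have strict: "\<bar>x s $ i\<bar> < v $ i * (K + \<delta>) * exp (-\<gamma> * (s - a))" if "\<delta> > 0" for \<delta>
    proof -
      have "\<forall>j. \<bar>y $ j\<bar> < v $ j * (K + \<delta>)"
        using inside vpos \<open>\<delta> > 0\<close> by (smt (verit) distrib_left mult_pos_pos)
      then show ?thesis
        using flow_box_strict_decay[OF \<open>metzler M\<close> vpos decay der start] \<open>a < s\<close> \<open>s < b\<close> by blast
    qed
    show "\<forall>\<^sub>F \<delta> in at_right 0. \<bar>x s $ i\<bar> \<le> v $ i * (K + \<delta>) * exp (-\<gamma> * (s - a))"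
      by (rule eventually_mono[OF eventually_at_right_less]) (use strict in \<open>auto intro: less_imp_le\<close>)
  qed (simp add: trivial_limit_at_right_real)
  have "\<bar>x b $ i\<bar> - v $ i * K * exp (-\<gamma> * (b - a)) \<le> 0" for i
  proof (rule tendsto_upperbound_at_left)
    show "((\<lambda>s. \<bar>x s $ i\<bar> - v $ i * K * exp (-\<gamma> * (s - a)))
      \<longlongrightarrow> \<bar>x b $ i\<bar> - v $ i * K * exp (-\<gamma> * (b - a))) (at_left b)"
      by (intro tendsto_intros stop)
  qed (use \<open>a < b\<close> open_interval in auto)
  then show ?thesis using open_interval by (force simp: le_less)
qed

lemma strict_mono_not_in_range_below:
  fixes tk :: "nat \<Rightarrow> real"
  assumes "strict_mono tk" "s < tk 0"
  shows "s \<notin> range tk"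
proof
  assume "s \<in> range tk"
  then obtain m where "s = tk m" by auto
  then show False using assms strict_mono_less_eq[OF assms(1), of 0 m] by simp
qed

lemma strict_mono_not_in_range_between:
  fixes tk :: "nat \<Rightarrow> real"
  assumes "strict_mono tk" "tk k < s" "s < tk (Suc k)"
  shows "s \<notin> range tk"
proof
  assume "s \<in> range tk"
  then obtain m where "s = tk m" by auto
  with assms have "k < m" "m < Suc k" using strict_mono_less[OF assms(1)] by auto
  then show False by simp
qed

lemma impulse_seq_covers:
  assumes "impulse_seq tk" "tk 0 < t"
  obtains k where "tk k < t" "t \<le> tk (Suc k)"
proof -
  have "\<exists>m. t \<le> tk m"
    using assms(1) unfolding impulse_seq_def filterlim_at_top eventually_sequentially by blast
  define m where "m = (LEAST m. t \<le> tk m)"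
  have "t \<le> tk m" unfolding m_def using \<open>\<exists>m. t \<le> tk m\<close> by (rule LeastI_ex)
  moreover have "m \<noteq> 0" using \<open>t \<le> tk m\<close> assms(2) by (metis not_le)
  then obtain k where "m = Suc k" using not0_implies_Suc by blast
  moreover have "\<not> t \<le> tk k" using not_less_Least[of k "\<lambda>m. t \<le> tk m"] \<open>m = Suc k\<close> m_def by simp
  ultimately show thesis using that by (simp add: not_le)
qed

lemma impulsive_solution_has_vector_derivative:
  assumes "impulsive_solution M N tk x" "s > 0" "s \<notin> range tk"
  shows "(x has_vector_derivative (M *v x s)) (at s)"
proof -
  have "(x has_vector_derivative (M *v x s)) (at s within {0..})"
    using assms unfolding impulsive_solution_def by auto
  then have "(x has_vector_derivative (M *v x s)) (at s within {0<..})"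
    by (rule has_vector_derivative_within_subset) auto
  then show ?thesis using at_within_open[of s "{0<..}"] \<open>s > 0\<close> by simp
qed

lemma impulsive_solution_tendsto_at_right_0:
  assumes "impulsive_solution M N tk x" "impulse_seq tk"
  shows "(x \<longlongrightarrow> x 0) (at_right 0)"
proof -
  have "0 \<notin> range tk"
    using assms(2) strict_mono_not_in_range_below unfolding impulse_seq_def by blast
  then have "continuous (at 0 within {0..}) x"
    using assms(1) has_vector_derivative_continuous unfolding impulsive_solution_def by blast
  then show ?thesis
    by (auto simp: continuous_within intro: tendsto_within_subset)
qed

lemma impulsive_solution_box_decay_between_impulses:
  fixes M N :: "real^'n^'n" and x :: "real \<Rightarrow> real^'n"
  assumes "metzler M" and vpos: "\<forall>i. v $ i > 0" and decay: "\<forall>i. (M *v v) $ i < -\<gamma> * v $ i"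
    and "nonneg_mat N" and Nv: "\<forall>i. (N *v v) $ i \<le> v $ i"
    and tk: "impulse_seq tk" and sol: "impulsive_solution M N tk x"
    and at_k: "\<forall>i. \<bar>x (tk k) $ i\<bar> \<le> v $ i * c"
  shows "\<forall>t i. tk k < t \<and> t \<le> tk (Suc k) \<longrightarrow> \<bar>x t $ i\<bar> \<le> v $ i * c * exp (-\<gamma> * (t - tk k))"
proof (rule flow_box_decay[OF \<open>metzler M\<close> vpos decay])
  have mono: "strict_mono tk" and "tk 0 > 0" using tk by (auto simp: impulse_seq_def)
  then have "tk k > 0" by (metis less_le_trans strict_mono_less_eq zero_le)
  show "\<forall>s. tk k < s \<and> s < tk (Suc k) \<longrightarrow> (x has_vector_derivative M *v x s) (at s)"
    using impulsive_solution_has_vector_derivative[OF sol] \<open>tk k > 0\<close>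
      strict_mono_not_in_range_between[OF mono] by fastforce
  show "tk k < tk (Suc k)" using strict_mono_less[OF mono] by blast
  show "(x \<longlongrightarrow> N *v x (tk k)) (at_right (tk k))" "(x \<longlongrightarrow> x (tk (Suc k))) (at_left (tk (Suc k)))"
    using sol by (auto simp: impulsive_solution_def)
  have "c \<ge> 0"
    using at_k[rule_format, of undefined] vpos[rule_format, of undefined]
    by (metis abs_ge_zero order.trans zero_le_mult_iff not_less)
  then show "\<forall>i. \<bar>(N *v x (tk k)) $ i\<bar> \<le> v $ i * c"
    using nonneg_mat_maps_box[OF \<open>nonneg_mat N\<close> Nv at_k] by blast
qed

lemma impulsive_solution_box_decay:
  fixes M N :: "real^'n^'n" and x :: "real \<Rightarrow> real^'n"
  assumes "metzler M" and vpos: "\<forall>i. v $ i > 0" and decay: "\<forall>i. (M *v v) $ i < -\<gamma> * v $ i"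
    and "nonneg_mat N" and "\<forall>i. (N *v v) $ i \<le> v $ i"
    and tk: "impulse_seq tk" and sol: "impulsive_solution M N tk x"
    and initial: "\<forall>i. \<bar>x 0 $ i\<bar> \<le> v $ i * K"
  shows "\<forall>t\<ge>0. \<forall>i. \<bar>x t $ i\<bar> \<le> v $ i * K * exp (-\<gamma> * t)"
proof -
  have mono: "strict_mono tk" and "tk 0 > 0" using tk by (auto simp: impulse_seq_def)
  have first: "\<forall>t i. 0 < t \<and> t \<le> tk 0 \<longrightarrow> \<bar>x t $ i\<bar> \<le> v $ i * K * exp (-\<gamma> * (t - 0))"
  proof (rule flow_box_decay[OF \<open>metzler M\<close> vpos decay _
        impulsive_solution_tendsto_at_right_0[OF sol tk] _ \<open>tk 0 > 0\<close> initial])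
    show "\<forall>s. 0 < s \<and> s < tk 0 \<longrightarrow> (x has_vector_derivative M *v x s) (at s)"
      using impulsive_solution_has_vector_derivative[OF sol] strict_mono_not_in_range_below[OF mono]
      by blast
    show "(x \<longlongrightarrow> x (tk 0)) (at_left (tk 0))" using sol by (simp add: impulsive_solution_def)
  qed
  have after: "\<forall>t i. tk k < t \<and> t \<le> tk (Suc k) \<longrightarrow> \<bar>x t $ i\<bar> \<le> v $ i * K * exp (-\<gamma> * t)"
    if "\<forall>i. \<bar>x (tk k) $ i\<bar> \<le> v $ i * (K * exp (-\<gamma> * tk k))" for k
  proof -
    have "exp (-\<gamma> * tk k) * exp (-\<gamma> * (t - tk k)) = exp (-\<gamma> * t)" for t
      by (simp add: exp_add[symmetric] algebra_simps)
    then show ?thesis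
      using impulsive_solution_box_decay_between_impulses[OF assms(1-7) that] by (simp add: mult.assoc)
  qed
  have at_impulses: "\<forall>i. \<bar>x (tk k) $ i\<bar> \<le> v $ i * (K * exp (-\<gamma> * tk k))" for k
  proof (induction k)
    case 0
    then show ?case using first \<open>tk 0 > 0\<close> by (simp add: mult.assoc)
  next
    case (Suc k)
    then show ?case using after[OF Suc] strict_mono_less[OF mono, of k "Suc k"] by (simp add: mult.assoc)
  qed
  show ?thesis
  proof (intro allI impI)
    fix t :: real and i assume "t \<ge> 0"
    consider "t = 0" | "0 < t" "t \<le> tk 0" | k where "tk k < t" "t \<le> tk (Suc k)"
      using impulse_seq_covers[OF tk] \<open>t \<ge> 0\<close> by (metis less_eq_real_def not_le)
    then show "\<bar>x t $ i\<bar> \<le> v $ i * K * exp (-\<gamma> * t)"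
      by cases (use initial first after[OF at_impulses] in auto)
  qed
qed

lemma exists_uniform_decay_rate:
  fixes M :: "real^'n^'n"
  assumes vpos: "\<forall>i. v $ i > 0" and "\<forall>i. (M *v v) $ i < 0"
  obtains \<gamma> where "\<gamma> > 0" "\<forall>i. (M *v v) $ i < -\<gamma> * v $ i"
proof
  define r where "r i = - (M *v v) $ i / v $ i" for i
  have "r i > 0" for i using assms by (simp add: r_def divide_neg_pos)
  then have "Min (range r) > 0" by simp
  then show "Min (range r) / 2 > 0" by simp
  show "\<forall>i. (M *v v) $ i < - (Min (range r) / 2) * v $ i"
  proof
    fix i
    have "Min (range r) \<le> r i" by simp
    then have "Min (range r) / 2 < r i" using \<open>Min (range r) > 0\<close> by linarith
    then show "(M *v v) $ i < - (Min (range r) / 2) * v $ i"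
      using vpos[rule_format, of i] by (simp add: r_def field_simps)
  qed
qed

lemma impulsive_solution_exponential_bound:
  fixes M N :: "real^'n^'n"
  assumes "metzler M" and vpos: "\<forall>i. v $ i > 0" and "\<forall>i. (M *v v) $ i < 0"
    and "nonneg_mat N" and "\<forall>i. (N *v v) $ i \<le> v $ i"
  obtains C \<gamma> where "C > 0" "\<gamma> > 0"
    "\<And>tk x t. impulse_seq tk \<Longrightarrow> impulsive_solution M N tk x \<Longrightarrow> t \<ge> 0 \<Longrightarrow>
       norm (x t) \<le> C * norm (x 0) * exp (-\<gamma> * t)"
proof -
  obtain \<gamma> where "\<gamma> > 0" and decay: "\<forall>i. (M *v v) $ i < -\<gamma> * v $ i"
    using exists_uniform_decay_rate assms(2,3) by blast
  define m where "m = Min (range (($) v))"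
  define S where "S = (\<Sum>i\<in>UNIV. v $ i)"
  have "m > 0" "\<forall>i. m \<le> v $ i" using vpos by (auto simp: m_def)
  have "S > 0" unfolding S_def using vpos by (simp add: sum_pos)
  have bound: "norm (x t) \<le> S / m * norm (x 0) * exp (-\<gamma> * t)"
    if "impulse_seq tk" "impulsive_solution M N tk x" "t \<ge> 0" for tk x t
  proof -
    have "\<bar>x 0 $ i\<bar> \<le> v $ i * (norm (x 0) / m)" for i
    proof -
      have "\<bar>x 0 $ i\<bar> \<le> m * (norm (x 0) / m)"
        using component_le_norm_cart[of "x 0" i] \<open>m > 0\<close> by simp
      also have "\<dots> \<le> v $ i * (norm (x 0) / m)"
        using mult_right_mono[of m "v $ i" "norm (x 0) / m"] \<open>\<forall>i. m \<le> v $ i\<close> \<open>m > 0\<close> by simp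
      finally show ?thesis .
    qed
    then have "\<forall>i. \<bar>x t $ i\<bar> \<le> v $ i * (norm (x 0) / m) * exp (-\<gamma> * t)"
      using impulsive_solution_box_decay[OF assms(1,2) decay assms(4,5) that(1,2)] that(3) by blast
    then have "norm (x t) \<le> (\<Sum>i\<in>UNIV. v $ i * (norm (x 0) / m) * exp (-\<gamma> * t))"
      using norm_le_l1_cart[of "x t"] sum_mono[of UNIV "\<lambda>i. \<bar>x t $ i\<bar>"] by (meson order_trans)
    also have "\<dots> = S / m * norm (x 0) * exp (-\<gamma> * t)"
      by (simp add: S_def sum_distrib_right sum_divide_distrib)
    finally show ?thesis .
  qed
  show thesis using that[OF _ \<open>\<gamma> > 0\<close> bound] \<open>m > 0\<close> \<open>S > 0\<close> by simp
qed

lemma GAS_arbitrary_dwell_if_exponential_bound: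
  assumes "C > 0" "\<gamma> > 0"
    and bound: "\<And>tk x t. impulse_seq tk \<Longrightarrow> impulsive_solution M N tk x \<Longrightarrow> t \<ge> 0 \<Longrightarrow>
       norm (x t) \<le> C * norm (x 0) * exp (-\<gamma> * t)"
  shows "GAS_arbitrary_dwell M N"
  unfolding GAS_arbitrary_dwell_def
proof (intro allI impI conjI)
  fix tk :: "nat \<Rightarrow> real" and \<epsilon> :: real assume tk: "impulse_seq tk" and "\<epsilon> > 0"
  show "\<exists>\<delta>>0. \<forall>x. impulsive_solution M N tk x \<longrightarrow> norm (x 0) < \<delta> \<longrightarrow> (\<forall>s\<ge>0. norm (x s) < \<epsilon>)"
  proof (intro exI[of _ "\<epsilon> / C"] conjI allI impI)
    show "\<epsilon> / C > 0" using \<open>\<epsilon> > 0\<close> \<open>C > 0\<close> by simp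
    fix x s assume "impulsive_solution M N tk x" "norm (x 0) < \<epsilon> / C" "s \<ge> (0::real)"
    have "norm (x s) \<le> C * norm (x 0) * exp (-\<gamma> * s)" by (rule bound) fact+
    also have "\<dots> \<le> C * norm (x 0)"
      using \<open>C > 0\<close> \<open>\<gamma> > 0\<close> \<open>s \<ge> 0\<close> by (simp add: mult_left_le)
    also have "\<dots> < \<epsilon>" using \<open>norm (x 0) < \<epsilon> / C\<close> \<open>C > 0\<close> by (simp add: field_simps)
    finally show "norm (x s) < \<epsilon>" .
  qed
next
  fix tk :: "nat \<Rightarrow> real" and x assume "impulse_seq tk" "impulsive_solution M N tk x"
  show "(x \<longlongrightarrow> 0) at_top"
  proof (rule Lim_null_comparison)
    show "\<forall>\<^sub>F t in at_top. norm (x t) \<le> C * norm (x 0) * exp (-\<gamma> * t)"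
      using eventually_ge_at_top[of "0::real"]
      by eventually_elim (rule bound[OF \<open>impulse_seq tk\<close> \<open>impulsive_solution M N tk x\<close>])
    show "((\<lambda>t. C * norm (x 0) * exp (-\<gamma> * t)) \<longlongrightarrow> 0) at_top"
      using \<open>\<gamma> > 0\<close> by real_asymp
  qed
qed

lemma GAS_arbitrary_dwell_if_linear_copositive:
  fixes M N :: "real^'n^'n"
  assumes "metzler M" "\<forall>i. v $ i > 0" "\<forall>i. (M *v v) $ i < 0"
    and "nonneg_mat N" "\<forall>i. (N *v v) $ i \<le> v $ i"
  shows "GAS_arbitrary_dwell M N"
proof -
  obtain C \<gamma> where "C > 0" "\<gamma> > 0"
    "\<And>tk x t. impulse_seq tk \<Longrightarrow> impulsive_solution M N tk x \<Longrightarrow> t \<ge> 0 \<Longrightarrow>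
       norm (x t) \<le> C * norm (x 0) * exp (-\<gamma> * t)"
    using impulsive_solution_exponential_bound[OF assms] by blast
  then show ?thesis by (rule GAS_arbitrary_dwell_if_exponential_bound)
qed

theorem theorem6:
  fixes A J X :: "real^'n^'n"
    and Bc :: "real^'mc^'n" and Uc :: "real^'n^'mc"
    and Bd :: "real^'md^'n" and Ud :: "real^'n^'md"
    and \<alpha> :: real
  assumes "pos_diag X"
    and "nonneg_mat (A ** X + Bc ** Uc + \<alpha> *\<^sub>R mat 1)"
    and "nonneg_mat (J ** X + Bd ** Ud)"
    and "\<forall>i. ((A ** X + Bc ** Uc) *v ones) $ i < 0"
    and "\<forall>i. ((J ** X + Bd ** Ud - X) *v ones) $ i < 0"
  shows "metzler (A + Bc ** (Uc ** matrix_inv X))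
       \<and> nonneg_mat (J + Bd ** (Ud ** matrix_inv X))
       \<and> GAS_arbitrary_dwell (A + Bc ** (Uc ** matrix_inv X)) (J + Bd ** (Ud ** matrix_inv X))"
proof -
  define d where "d = (\<chi> i. X $ i $ i)"
  define Xi where "Xi = diag_mat (\<chi> i. 1 / d $ i)"
  have X: "X = diag_mat d" unfolding d_def using assms(1) by (rule pos_diag_eq_diag_mat)
  have d: "\<forall>i. d $ i > 0" using assms(1) by (simp add: pos_diag_def d_def)
  then have "\<forall>i. d $ i \<noteq> 0" by (metis less_irrefl)
  then have "matrix_inv X = Xi" "X ** Xi = mat 1" "Xi ** X = mat 1"
    unfolding X Xi_def by (simp_all add: matrix_inv_diag_mat diag_mat_mul_inverse)
  define P where "P = A ** X + Bc ** Uc"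
  define Q where "Q = J ** X + Bd ** Ud"
  have closed_loop: "A + Bc ** (Uc ** matrix_inv X) = P ** Xi" "J + Bd ** (Ud ** matrix_inv X) = Q ** Xi"
    unfolding P_def Q_def \<open>matrix_inv X = Xi\<close> using feedback_closed_loop \<open>X ** Xi = mat 1\<close> by blast+
  have "\<forall>i. (\<chi> i. 1 / d $ i) $ i \<ge> 0" using d by (simp add: less_imp_le)
  then have "metzler (P ** Xi)" "nonneg_mat (Q ** Xi)"
    unfolding P_def Q_def Xi_def
    by (rule metzler_mul_diag_mat[OF metzler_if_nonneg_mat_add_scaled_id[OF assms(2)]]
        nonneg_mat_mul_diag_mat[OF assms(3)])+
  have "d = X *v ones" by (simp add: X diag_mat_mult_ones)
  then have "(P ** Xi) *v d = P *v ones" "(Q ** Xi) *v d = Q *v ones"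
    by (simp_all add: matrix_vector_mul_assoc matrix_mul_assoc[symmetric] \<open>Xi ** X = mat 1\<close>)
  with assms(4,5) \<open>d = X *v ones\<close> have "\<forall>i. ((P ** Xi) *v d) $ i < 0" "\<forall>i. ((Q ** Xi) *v d) $ i \<le> d $ i"
    unfolding P_def Q_def by (auto simp: matrix_vector_mult_diff_rdistrib less_imp_le)
  then have "GAS_arbitrary_dwell (P ** Xi) (Q ** Xi)"
    using GAS_arbitrary_dwell_if_linear_copositive \<open>metzler (P ** Xi)\<close> \<open>nonneg_mat (Q ** Xi)\<close> d
    by blast
  with \<open>metzler (P ** Xi)\<close> \<open>nonneg_mat (Q ** Xi)\<close> show ?thesis unfolding closed_loop by blast
qed

end
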